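(* Let $\mathcal R=(c_0,|||\cdot|||)$ be Read's space (defined in the context). Under the canonical identification of the bidual $\mathcal R^{**}$ with $\ell_\infty$ (coming from $c_0^{**}=\ell_\infty$ as vector spaces, the norm $|||\cdot|||$ being equivalent to $\|\cdot\|_\infty$), the bidual norm of $\mathcal R^{**}$ is given, for every $\bar x\in\ell_\infty$, by the same formula $$|||\bar x||| = \|\bar x\|_\infty + \sum_{n \in \mathbb N} 2^{-a_n^2}\left|\langle \bar x, u_n - e_{a_n} \rangle\right|.$$ That is, $\mathcal R^{**}$ is isometric to $\ell_\infty$ equipped with this norm.
   Context: Let $c_{00}(\mathbb Q)$ be the set of finitely supported sequences with rational coefficients, and let $(u_n)_{n\in\mathbb N}$ be a sequence in $c_{00}(\mathbb Q)$ which lists every element of $c_{00}(\mathbb Q)$ infinitely many times. Let $(a_n)_{n\in\mathbb N}$ be a strictly increasing sequence of positive integers with $a_n>\max\operatorname{supp} u_n$ and $a_n>\|u_n\|_1$ for every $n$. $(e_n)$ denotes the canonical unit vectors and $\langle x,y\rangle=\sum_n x_ny_n$ for $x\in\ell_\infty$, $y\in\ell_1$. Read's norm on $c_0$ is $|||x||| = \|x\|_\infty + \sum_{n} 2^{-a_n^2}|\langle x, u_n - e_{a_n}\rangle|$ for $x\in c_0$; it satisfies $\|x\|_\infty\le|||x|||\le 3\|x\|_\infty$, and Read's space is $\mathcal R=(c_0,|||\cdot|||)$. All spaces are real. *)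

theory Defs
  imports "HOL-Analysis.Analysis"
begin

text \<open>Sequences are functions nat => real (indices start at 0).\<close>

definition unitvec :: "nat \<Rightarrow> nat \<Rightarrow> real" where
  "unitvec n = (\<lambda>k. if k = n then 1 else 0)"

definition pairing :: "(nat \<Rightarrow> real) \<Rightarrow> (nat \<Rightarrow> real) \<Rightarrow> real" where
  "pairing x y = (\<Sum>k. x k * y k)"

definition sup_norm :: "(nat \<Rightarrow> real) \<Rightarrow> real" where
  "sup_norm x = (SUP k. \<bar>x k\<bar>)"

definition l1_norm :: "(nat \<Rightarrow> real) \<Rightarrow> real" where
  "l1_norm y = (\<Sum>k. \<bar>y k\<bar>)"

definition in_c0 :: "(nat \<Rightarrow> real) \<Rightarrow> bool" where
  "in_c0 x \<longleftrightarrow> x \<longlonglongrightarrow> 0"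

definition in_linf :: "(nat \<Rightarrow> real) \<Rightarrow> bool" where
  "in_linf x \<longleftrightarrow> bounded (range x)"

definition in_l1 :: "(nat \<Rightarrow> real) \<Rightarrow> bool" where
  "in_l1 y \<longleftrightarrow> summable (\<lambda>k. \<bar>y k\<bar>)"

definition c00Q :: "(nat \<Rightarrow> rat) set" where
  "c00Q = {v. finite {k. v k \<noteq> 0}}"

definition read_data :: "(nat \<Rightarrow> nat \<Rightarrow> rat) \<Rightarrow> (nat \<Rightarrow> nat) \<Rightarrow> bool" where
  "read_data u a \<longleftrightarrow>
     (\<forall>n. u n \<in> c00Q) \<and>
     (\<forall>v\<in>c00Q. infinite {n. u n = v}) \<and>
     strict_mono a \<and> (\<forall>n. 0 < a n) \<and>
     (\<forall>n. \<forall>k. u n k \<noteq> 0 \<longrightarrow> k < a n) \<and>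
     (\<forall>n. l1_norm (\<lambda>k. real_of_rat (u n k)) < real (a n))"

definition read_norm :: "(nat \<Rightarrow> nat \<Rightarrow> rat) \<Rightarrow> (nat \<Rightarrow> nat) \<Rightarrow> (nat \<Rightarrow> real) \<Rightarrow> real" where
  "read_norm u a x = sup_norm x +
     (\<Sum>n. inverse (2 ^ (a n ^ 2)) *
        \<bar>pairing x (\<lambda>k. real_of_rat (u n k) - unitvec (a n) k)\<bar>)"

text \<open>Dual unit ball of Read's space, with \<open>\<R>^* = c_0^* \<cong> \<ell>_1\<close> via the pairing:
  \<open>y \<in> \<ell>_1\<close> with dual norm \<open>sup {|<x,y>| : x \<in> c_0, |||x||| \<le> 1} \<le> 1\<close>.\<close>
definition read_dual_ball :: "(nat \<Rightarrow> nat \<Rightarrow> rat) \<Rightarrow> (nat \<Rightarrow> nat) \<Rightarrow> (nat \<Rightarrow> real) set" where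
  "read_dual_ball u a = {y. in_l1 y \<and> (\<forall>x. in_c0 x \<longrightarrow> \<bar>pairing x y\<bar> \<le> read_norm u a x)}"

text \<open>Bidual norm of \<open>x \<in> \<ell>_\<infinity>\<close>, viewed as the functional \<open>y \<mapsto> <x,y>\<close> on \<open>\<R>^*\<close>.\<close>
definition read_bidual_norm :: "(nat \<Rightarrow> nat \<Rightarrow> rat) \<Rightarrow> (nat \<Rightarrow> nat) \<Rightarrow> (nat \<Rightarrow> real) \<Rightarrow> real" where
  "read_bidual_norm u a x = (SUP y \<in> read_dual_ball u a. \<bar>pairing x y\<bar>)"

end

theory Submission
  imports Defs
begin

text \<open>Put w_n = 2^(-a_n^2) and v_n = u_n - e_(a_n); the only property of these data that
  matters is that sum_n w_n ||v_n||_1 is finite.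
  Upper bound: an l_1 functional y of dual norm at most 1 is tested on the truncations of x,
  which lie in c_0, have sup norm at most ||x||_oo, and whose perturbation series converge to
  that of x by dominated convergence (Tannery's theorem).
  Lower bound: sgn(x_k) e_k + sum_(n<M) w_n sgn<x,v_n> v_n lies in the dual ball by the
  triangle inequality, and for |x_k| close to ||x||_oo and M large its value at x is close to
  the norm of x.\<close>

lemma in_c0_imp_in_linf: "in_c0 x \<Longrightarrow> in_linf x"
  unfolding in_c0_def in_linf_def
  by (metis Bseq_eq_bounded convergentI convergent_imp_Bseq)

lemma bdd_above_abs_linf: "in_linf x \<Longrightarrow> bdd_above (range (\<lambda>k. \<bar>x k\<bar>))"
  unfolding in_linf_def bounded_iff by (auto intro: bdd_aboveI2)

lemma abs_le_sup_norm: "in_linf x \<Longrightarrow> \<bar>x k\<bar> \<le> sup_norm x"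
  unfolding sup_norm_def by (rule cSUP_upper[OF UNIV_I bdd_above_abs_linf])

lemma sup_norm_nonneg: "in_linf x \<Longrightarrow> 0 \<le> sup_norm x"
  using abs_le_sup_norm[of x 0] by linarith

lemma sup_norm_le: "(\<And>k. \<bar>x k\<bar> \<le> c) \<Longrightarrow> sup_norm x \<le> c"
  unfolding sup_norm_def by (rule cSUP_least) auto

lemma summable_abs_mult_linf_l1:
  assumes "in_linf x" "in_l1 y"
  shows "summable (\<lambda>k. \<bar>x k * y k\<bar>)"
proof (rule summable_comparison_test')
  show "summable (\<lambda>k. sup_norm x * \<bar>y k\<bar>)"
    using assms(2) unfolding in_l1_def by (rule summable_mult)
  show "norm \<bar>x k * y k\<bar> \<le> sup_norm x * \<bar>y k\<bar>" for k
    using abs_le_sup_norm[OF assms(1), of k] by (simp add: abs_mult mult_right_mono)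
qed

lemma summable_mult_linf_l1: "in_linf x \<Longrightarrow> in_l1 y \<Longrightarrow> summable (\<lambda>k. x k * y k)"
  by (rule summable_rabs_cancel) (rule summable_abs_mult_linf_l1)

lemma abs_pairing_le:
  assumes "in_linf x" "in_l1 y"
  shows "\<bar>pairing x y\<bar> \<le> sup_norm x * l1_norm y"
proof -
  have "\<bar>pairing x y\<bar> \<le> (\<Sum>k. \<bar>x k * y k\<bar>)"
    unfolding pairing_def by (rule summable_rabs[OF summable_abs_mult_linf_l1[OF assms]])
  also have "\<dots> \<le> (\<Sum>k. sup_norm x * \<bar>y k\<bar>)"
  proof (rule suminf_le)
    show "\<bar>x k * y k\<bar> \<le> sup_norm x * \<bar>y k\<bar>" for k
      using abs_le_sup_norm[OF assms(1), of k] by (simp add: abs_mult mult_right_mono)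
    show "summable (\<lambda>k. sup_norm x * \<bar>y k\<bar>)"
      using assms(2) unfolding in_l1_def by (rule summable_mult)
  qed (rule summable_abs_mult_linf_l1[OF assms])
  also have "\<dots> = sup_norm x * l1_norm y"
    using assms(2) unfolding l1_norm_def in_l1_def by (rule suminf_mult)
  finally show ?thesis .
qed

lemma in_l1_add: "in_l1 y \<Longrightarrow> in_l1 z \<Longrightarrow> in_l1 (\<lambda>k. y k + z k)"
  unfolding in_l1_def
  by (rule summable_comparison_test'[where g="\<lambda>k. \<bar>y k\<bar> + \<bar>z k\<bar>"])
    (auto intro: summable_add abs_triangle_ineq)

lemma in_l1_diff: "in_l1 y \<Longrightarrow> in_l1 z \<Longrightarrow> in_l1 (\<lambda>k. y k - z k)"
  unfolding in_l1_def
  by (rule summable_comparison_test'[where g="\<lambda>k. \<bar>y k\<bar> + \<bar>z k\<bar>"])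
    (auto intro: summable_add abs_triangle_ineq4)

lemma in_l1_scale: "in_l1 y \<Longrightarrow> in_l1 (\<lambda>k. c * y k)"
  unfolding in_l1_def abs_mult by (rule summable_mult)

lemma in_l1_sum: "(\<And>n. n \<in> F \<Longrightarrow> in_l1 (v n)) \<Longrightarrow> in_l1 (\<lambda>k. \<Sum>n\<in>F. v n k)"
proof (induction F rule: infinite_finite_induct)
  case (insert n F)
  then show ?case by (simp add: in_l1_add)
qed (simp_all add: in_l1_def)

lemma in_l1_finite_support: "finite {k. y k \<noteq> 0} \<Longrightarrow> in_l1 y"
  unfolding in_l1_def by (rule summable_finite) auto

lemma l1_norm_nonneg: "in_l1 y \<Longrightarrow> 0 \<le> l1_norm y"
  unfolding in_l1_def l1_norm_def by (rule suminf_nonneg) simp_all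

lemma l1_norm_diff_le:
  assumes "in_l1 y" "in_l1 z"
  shows "l1_norm (\<lambda>k. y k - z k) \<le> l1_norm y + l1_norm z"
proof -
  have "(\<Sum>k. \<bar>y k - z k\<bar>) \<le> (\<Sum>k. \<bar>y k\<bar> + \<bar>z k\<bar>)"
    using assms in_l1_diff[OF assms] unfolding in_l1_def
    by (intro suminf_le summable_add abs_triangle_ineq4)
  also have "\<dots> = l1_norm y + l1_norm z"
    using assms unfolding in_l1_def l1_norm_def by (rule suminf_add[symmetric])
  finally show ?thesis unfolding l1_norm_def .
qed

lemma in_l1_unitvec: "in_l1 (unitvec n)"
  by (rule in_l1_finite_support) (simp add: unitvec_def)

lemma l1_norm_unitvec: "l1_norm (unitvec n) = 1"
  using sums_single[of n "\<lambda>_. 1::real"] unfolding l1_norm_def unitvec_def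
  by (simp add: if_distrib sums_iff cong: if_cong)

lemma pairing_unitvec: "pairing x (unitvec n) = x n"
  using sums_single[of n x] unfolding pairing_def unitvec_def
  by (simp add: if_distrib sums_iff cong: if_cong)

lemma pairing_add_right:
  "in_linf x \<Longrightarrow> in_l1 y \<Longrightarrow> in_l1 z \<Longrightarrow> pairing x (\<lambda>k. y k + z k) = pairing x y + pairing x z"
  unfolding pairing_def by (simp add: distrib_left suminf_add summable_mult_linf_l1)

lemma pairing_scale_right:
  "in_linf x \<Longrightarrow> in_l1 y \<Longrightarrow> pairing x (\<lambda>k. c * y k) = c * pairing x y"
  unfolding pairing_def using suminf_mult[OF summable_mult_linf_l1, of x y c]
  by (simp add: ac_simps)

lemma pairing_sum_right:
  "in_linf x \<Longrightarrow> (\<And>n. n \<in> F \<Longrightarrow> in_l1 (v n)) \<Longrightarrow>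
    pairing x (\<lambda>k. \<Sum>n\<in>F. v n k) = (\<Sum>n\<in>F. pairing x (v n))"
  unfolding pairing_def by (simp add: sum_distrib_left suminf_sum summable_mult_linf_l1)

definition truncation :: "nat \<Rightarrow> (nat \<Rightarrow> real) \<Rightarrow> nat \<Rightarrow> real" where
  "truncation N x k = (if k < N then x k else 0)"

lemma in_c0_truncation: "in_c0 (truncation N x)"
  unfolding in_c0_def
  by (rule tendsto_eventually) (auto simp: truncation_def eventually_sequentially intro: exI[of _ N])

lemma sup_norm_truncation_le: "in_linf x \<Longrightarrow> sup_norm (truncation N x) \<le> sup_norm x"
  by (rule sup_norm_le) (auto simp: truncation_def intro: abs_le_sup_norm sup_norm_nonneg)

lemma tendsto_pairing_truncation:
  assumes "in_linf x" "in_l1 y"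
  shows "(\<lambda>N. pairing (truncation N x) y) \<longlonglongrightarrow> pairing x y"
proof -
  have "pairing (truncation N x) y = (\<Sum>k<N. x k * y k)" for N
    unfolding pairing_def by (subst suminf_finite[of "{..<N}"]) (auto simp: truncation_def)
  then show ?thesis
    using summable_LIMSEQ[OF summable_mult_linf_l1[OF assms]] unfolding pairing_def by simp
qed

definition dual_ball :: "((nat \<Rightarrow> real) \<Rightarrow> real) \<Rightarrow> (nat \<Rightarrow> real) set" where
  "dual_ball p = {y. in_l1 y \<and> (\<forall>x. in_c0 x \<longrightarrow> \<bar>pairing x y\<bar> \<le> p x)}"

definition bidual_norm :: "((nat \<Rightarrow> real) \<Rightarrow> real) \<Rightarrow> (nat \<Rightarrow> real) \<Rightarrow> real" where
  "bidual_norm p x = (SUP y \<in> dual_ball p. \<bar>pairing x y\<bar>)"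

definition perturbed_sup_norm ::
    "(nat \<Rightarrow> real) \<Rightarrow> (nat \<Rightarrow> nat \<Rightarrow> real) \<Rightarrow> (nat \<Rightarrow> real) \<Rightarrow> real" where
  "perturbed_sup_norm w v x = sup_norm x + (\<Sum>n. w n * \<bar>pairing x (v n)\<bar>)"

locale sup_norm_perturbation =
  fixes w :: "nat \<Rightarrow> real" and v :: "nat \<Rightarrow> nat \<Rightarrow> real"
  assumes weight_nonneg: "0 \<le> w n"
    and in_l1_vector: "in_l1 (v n)"
    and summable_weighted_l1_norm: "summable (\<lambda>n. w n * l1_norm (v n))"
begin

lemma weighted_pairing_le:
  "in_linf x \<Longrightarrow> w n * \<bar>pairing x (v n)\<bar> \<le> sup_norm x * (w n * l1_norm (v n))"
  using mult_left_mono[OF abs_pairing_le[OF _ in_l1_vector] weight_nonneg]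
  by (simp add: ac_simps)

lemma summable_weighted_pairing: "in_linf x \<Longrightarrow> summable (\<lambda>n. w n * \<bar>pairing x (v n)\<bar>)"
  by (rule summable_comparison_test'[OF summable_mult[OF summable_weighted_l1_norm, of "sup_norm x"]])
    (simp add: abs_mult weight_nonneg weighted_pairing_le)

lemma tendsto_weighted_pairing_truncation:
  assumes "in_linf x"
  shows "(\<lambda>N. \<Sum>n. w n * \<bar>pairing (truncation N x) (v n)\<bar>) \<longlonglongrightarrow> (\<Sum>n. w n * \<bar>pairing x (v n)\<bar>)"
proof -
  have "eventually (\<lambda>N. summable (\<lambda>n. norm (w n * \<bar>pairing (truncation N x) (v n)\<bar>))) sequentially \<and>
      summable (\<lambda>n. norm (w n * \<bar>pairing x (v n)\<bar>)) \<and>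
      (\<lambda>N. \<Sum>n. w n * \<bar>pairing (truncation N x) (v n)\<bar>) \<longlonglongrightarrow> (\<Sum>n. w n * \<bar>pairing x (v n)\<bar>)"
  proof (rule tannerys_theorem[where M = "\<lambda>n. sup_norm x * (w n * l1_norm (v n))"])
    show "(\<lambda>N. w n * \<bar>pairing (truncation N x) (v n)\<bar>) \<longlonglongrightarrow> w n * \<bar>pairing x (v n)\<bar>" for n
      by (intro tendsto_intros tendsto_pairing_truncation assms in_l1_vector)
    have "norm (w n * \<bar>pairing (truncation N x) (v n)\<bar>) \<le> sup_norm x * (w n * l1_norm (v n))"
      for n N
    proof -
      have "norm (w n * \<bar>pairing (truncation N x) (v n)\<bar>)
          \<le> sup_norm (truncation N x) * (w n * l1_norm (v n))"
        using weighted_pairing_le[OF in_c0_imp_in_linf[OF in_c0_truncation]]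
        by (simp add: abs_mult weight_nonneg)
      also have "\<dots> \<le> sup_norm x * (w n * l1_norm (v n))"
        using sup_norm_truncation_le[OF assms]
        by (intro mult_right_mono mult_nonneg_nonneg weight_nonneg l1_norm_nonneg in_l1_vector)
      finally show ?thesis .
    qed
    then show "\<forall>\<^sub>F (n, N) in at_top \<times>\<^sub>F sequentially.
        norm (w n * \<bar>pairing (truncation N x) (v n)\<bar>) \<le> sup_norm x * (w n * l1_norm (v n))"
      by (intro always_eventually) auto
    show "summable (\<lambda>n. sup_norm x * (w n * l1_norm (v n)))"
      by (rule summable_mult[OF summable_weighted_l1_norm])
  qed simp
  then show ?thesis by blast
qed

lemma abs_pairing_le_perturbed_sup_norm:
  assumes "y \<in> dual_ball (perturbed_sup_norm w v)" "in_linf x"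
  shows "\<bar>pairing x y\<bar> \<le> perturbed_sup_norm w v x"
proof -
  have "\<bar>pairing (truncation N x) y\<bar>
      \<le> sup_norm x + (\<Sum>n. w n * \<bar>pairing (truncation N x) (v n)\<bar>)" for N
    using assms(1) in_c0_truncation[of N x] sup_norm_truncation_le[OF assms(2), of N]
    unfolding dual_ball_def perturbed_sup_norm_def by fastforce
  moreover have "in_l1 y"
    using assms(1) unfolding dual_ball_def by blast
  ultimately show ?thesis
    unfolding perturbed_sup_norm_def
    by (intro LIMSEQ_le[OF tendsto_rabs[OF tendsto_pairing_truncation[OF assms(2)]]
          tendsto_add[OF tendsto_const tendsto_weighted_pairing_truncation[OF assms(2)]]]) auto
qed

lemma in_l1_norming_functional:
  "in_l1 (\<lambda>j. s * unitvec k j + (\<Sum>n<M. w n * \<sigma> n * v n j))"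
  by (intro in_l1_add in_l1_scale in_l1_unitvec in_l1_sum in_l1_vector)

lemma pairing_norming_functional:
  assumes "in_linf x"
  shows "pairing x (\<lambda>j. s * unitvec k j + (\<Sum>n<M. w n * \<sigma> n * v n j))
    = s * x k + (\<Sum>n<M. w n * \<sigma> n * pairing x (v n))"
  using assms
  by (simp add: pairing_add_right pairing_scale_right pairing_sum_right pairing_unitvec
      in_l1_scale in_l1_sum in_l1_unitvec in_l1_vector mult.assoc)

lemma norming_functional_in_dual_ball:
  assumes "\<bar>s\<bar> \<le> 1" "\<And>n. \<bar>\<sigma> n\<bar> \<le> 1"
  shows "(\<lambda>j. s * unitvec k j + (\<Sum>n<M. w n * \<sigma> n * v n j)) \<in> dual_ball (perturbed_sup_norm w v)"
proof -
  have "\<bar>pairing x (\<lambda>j. s * unitvec k j + (\<Sum>n<M. w n * \<sigma> n * v n j))\<bar>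
      \<le> perturbed_sup_norm w v x" if "in_c0 x" for x
  proof -
    have x: "in_linf x"
      using that by (rule in_c0_imp_in_linf)
    have "\<bar>pairing x (\<lambda>j. s * unitvec k j + (\<Sum>n<M. w n * \<sigma> n * v n j))\<bar>
        = \<bar>s * x k + (\<Sum>n<M. w n * \<sigma> n * pairing x (v n))\<bar>"
      by (simp only: pairing_norming_functional[OF x])
    also have "\<dots> \<le> \<bar>s * x k\<bar> + \<bar>\<Sum>n<M. w n * \<sigma> n * pairing x (v n)\<bar>"
      by (rule abs_triangle_ineq)
    also have "\<dots> \<le> sup_norm x + (\<Sum>n<M. w n * \<bar>pairing x (v n)\<bar>)"
    proof (rule add_mono)
      show "\<bar>s * x k\<bar> \<le> sup_norm x"
        using mult_mono[OF assms(1) abs_le_sup_norm[OF x]] by (simp add: abs_mult)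
      show "\<bar>\<Sum>n<M. w n * \<sigma> n * pairing x (v n)\<bar> \<le> (\<Sum>n<M. w n * \<bar>pairing x (v n)\<bar>)"
      proof (rule order_trans[OF sum_abs sum_mono])
        show "\<bar>w n * \<sigma> n * pairing x (v n)\<bar> \<le> w n * \<bar>pairing x (v n)\<bar>" for n
          using mult_left_mono[OF mult_right_mono[OF assms(2)[of n] abs_ge_zero] weight_nonneg]
          by (simp add: abs_mult weight_nonneg mult.assoc)
      qed
    qed
    also have "\<dots> \<le> perturbed_sup_norm w v x"
      unfolding perturbed_sup_norm_def
      by (intro add_left_mono sum_le_suminf summable_weighted_pairing x) (simp_all add: weight_nonneg)
    finally show ?thesis .
  qed
  then show ?thesis
    unfolding dual_ball_def using in_l1_norming_functional by blast
qed

lemma exists_almost_norming_functional: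
  assumes x: "in_linf x" and e: "0 < e"
  obtains y where "y \<in> dual_ball (perturbed_sup_norm w v)"
    and "perturbed_sup_norm w v x - e < \<bar>pairing x y\<bar>"
proof -
  obtain k where k: "sup_norm x - e / 2 < \<bar>x k\<bar>"
    using less_cSUP_iff[OF _ bdd_above_abs_linf[OF x], of "sup_norm x - e / 2"] e
    unfolding sup_norm_def by auto
  have "(\<lambda>M. \<Sum>n<M. w n * \<bar>pairing x (v n)\<bar>) \<longlonglongrightarrow> (\<Sum>n. w n * \<bar>pairing x (v n)\<bar>)"
    by (rule summable_LIMSEQ[OF summable_weighted_pairing[OF x]])
  then have "\<forall>\<^sub>F M in sequentially.
      (\<Sum>n. w n * \<bar>pairing x (v n)\<bar>) - e / 2 < (\<Sum>n<M. w n * \<bar>pairing x (v n)\<bar>)"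
    by (rule order_tendstoD) (use e in simp)
  then obtain M where M:
    "(\<Sum>n. w n * \<bar>pairing x (v n)\<bar>) - e / 2 < (\<Sum>n<M. w n * \<bar>pairing x (v n)\<bar>)"
    unfolding eventually_sequentially by blast
  let ?y = "\<lambda>j. sgn (x k) * unitvec k j + (\<Sum>n<M. w n * sgn (pairing x (v n)) * v n j)"
  have "?y \<in> dual_ball (perturbed_sup_norm w v)"
    by (rule norming_functional_in_dual_ball) (simp_all add: abs_sgn_eq)
  moreover have "perturbed_sup_norm w v x - e < \<bar>pairing x ?y\<bar>"
  proof -
    have sgn_mult_self: "sgn t * t = \<bar>t\<bar>" for t :: real
      by (simp add: sgn_if)
    have "perturbed_sup_norm w v x - e < \<bar>x k\<bar> + (\<Sum>n<M. w n * \<bar>pairing x (v n)\<bar>)"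
      using k M unfolding perturbed_sup_norm_def by linarith
    also have "\<dots> = pairing x ?y"
      unfolding pairing_norming_functional[OF x] by (simp add: mult.assoc sgn_mult_self)
    also have "\<dots> \<le> \<bar>pairing x ?y\<bar>"
      by (rule abs_ge_self)
    finally show ?thesis .
  qed
  ultimately show ?thesis
    by (rule that)
qed

theorem bidual_norm_perturbed_sup_norm:
  assumes "in_linf x"
  shows "bidual_norm (perturbed_sup_norm w v) x = perturbed_sup_norm w v x"
proof -
  let ?B = "dual_ball (perturbed_sup_norm w v)"
  have upper: "\<bar>pairing x y\<bar> \<le> perturbed_sup_norm w v x" if "y \<in> ?B" for y
    using that assms by (rule abs_pairing_le_perturbed_sup_norm)
  have "?B \<noteq> {}"
    using exists_almost_norming_functional[OF assms zero_less_one] by blast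
  then have "bidual_norm (perturbed_sup_norm w v) x \<le> perturbed_sup_norm w v x"
    unfolding bidual_norm_def by (rule cSUP_least) (rule upper)
  moreover have "perturbed_sup_norm w v x \<le> bidual_norm (perturbed_sup_norm w v) x + e"
    if e: "0 < e" for e
  proof -
    obtain y where y: "y \<in> ?B" "perturbed_sup_norm w v x - e < \<bar>pairing x y\<bar>"
      using exists_almost_norming_functional[OF assms e] .
    have "\<bar>pairing x y\<bar> \<le> bidual_norm (perturbed_sup_norm w v) x"
      unfolding bidual_norm_def by (rule cSUP_upper[OF y(1)]) (auto intro: bdd_aboveI2 upper)
    with y(2) show ?thesis by linarith
  qed
  ultimately show ?thesis
    by (meson antisym field_le_epsilon)
qed

end

lemma read_norm_eq_perturbed_sup_norm:
  "read_norm u a = perturbed_sup_norm (\<lambda>n. inverse (2 ^ (a n ^ 2)))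
     (\<lambda>n k. real_of_rat (u n k) - unitvec (a n) k)"
  by (simp add: fun_eq_iff read_norm_def perturbed_sup_norm_def)

lemma read_bidual_norm_eq_bidual_norm: "read_bidual_norm u a = bidual_norm (read_norm u a)"
  by (simp add: fun_eq_iff read_bidual_norm_def bidual_norm_def read_dual_ball_def dual_ball_def)

lemma succ_over_power_square_le: "(real m + 1) / 2 ^ (m ^ 2) \<le> 2 * (1 / 2) ^ m"
proof -
  have "m + 1 \<le> 2 ^ m"
    using less_exp[of m] by linarith
  then have "(m + 1) * 2 ^ m \<le> 2 ^ m * (2 ^ m :: nat)"
    by (rule mult_right_mono) simp
  also have "\<dots> = 2 ^ (2 * m)"
    by (simp add: mult_2 power_add)
  also have "\<dots> \<le> 2 ^ (m ^ 2 + 1)"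
    by (rule power_increasing) (cases m, simp_all add: power2_eq_square)
  finally have "real ((m + 1) * 2 ^ m) \<le> real (2 ^ (m ^ 2 + 1))"
    by (simp only: of_nat_le_iff)
  then have "(real m + 1) * 2 ^ m \<le> 2 * 2 ^ (m ^ 2)"
    by (simp add: distrib_right)
  then show ?thesis
    by (simp add: field_simps power_divide)
qed

lemma read_data_sup_norm_perturbation:
  assumes "read_data u a"
  shows "sup_norm_perturbation (\<lambda>n. inverse (2 ^ (a n ^ 2)))
    (\<lambda>n k. real_of_rat (u n k) - unitvec (a n) k)"
proof -
  have u: "in_l1 (\<lambda>k. real_of_rat (u n k))" for n
  proof -
    have "finite {k. u n k \<noteq> 0}"
      using assms unfolding read_data_def c00Q_def by blast
    then show ?thesis
      by (intro in_l1_finite_support) simp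
  qed
  have v: "in_l1 (\<lambda>k. real_of_rat (u n k) - unitvec (a n) k)" for n
    by (rule in_l1_diff[OF u in_l1_unitvec])
  have weighted_l1_norm_le:
    "inverse (2 ^ (a n ^ 2)) * l1_norm (\<lambda>k. real_of_rat (u n k) - unitvec (a n) k)
      \<le> 2 * (1 / 2) ^ n" for n
  proof -
    have "l1_norm (\<lambda>k. real_of_rat (u n k) - unitvec (a n) k)
        \<le> l1_norm (\<lambda>k. real_of_rat (u n k)) + 1"
      using l1_norm_diff_le[OF u in_l1_unitvec] l1_norm_unitvec by metis
    also have "\<dots> \<le> real (a n) + 1"
      using assms unfolding read_data_def by (simp add: less_imp_le)
    finally have "inverse (2 ^ (a n ^ 2)) * l1_norm (\<lambda>k. real_of_rat (u n k) - unitvec (a n) k)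
        \<le> (real (a n) + 1) / 2 ^ (a n ^ 2)"
      by (simp add: divide_inverse_commute mult_left_mono)
    also have "\<dots> \<le> 2 * (1 / 2) ^ a n"
      by (rule succ_over_power_square_le)
    also have "\<dots> \<le> 2 * (1 / 2) ^ n"
      using assms strict_mono_imp_increasing unfolding read_data_def
      by (simp add: power_decreasing)
    finally show ?thesis .
  qed
  show ?thesis
  proof
    show "0 \<le> inverse (2 ^ (a n ^ 2) :: real)" for n
      by simp
    show "in_l1 (\<lambda>k. real_of_rat (u n k) - unitvec (a n) k)" for n
      by (rule v)
    show "summable (\<lambda>n. inverse (2 ^ (a n ^ 2))
        * l1_norm (\<lambda>k. real_of_rat (u n k) - unitvec (a n) k))"
      by (rule summable_comparison_test'[OF summable_mult[OF summable_geometric[of "1 / 2"], of 2]])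
        (simp_all add: abs_mult l1_norm_nonneg[OF v] weighted_l1_norm_le)
  qed
qed

theorem proposition2p1:
  fixes u :: "nat \<Rightarrow> nat \<Rightarrow> rat" and a :: "nat \<Rightarrow> nat" and x :: "nat \<Rightarrow> real"
  assumes "read_data u a"
    and "in_linf x"
  shows "read_bidual_norm u a x = read_norm u a x"
proof -
  interpret sup_norm_perturbation "\<lambda>n. inverse (2 ^ (a n ^ 2))"
    "\<lambda>n k. real_of_rat (u n k) - unitvec (a n) k"
    using assms(1) by (rule read_data_sup_norm_perturbation)
  show ?thesis
    unfolding read_bidual_norm_eq_bidual_norm read_norm_eq_perturbed_sup_norm
    by (rule bidual_norm_perturbed_sup_norm[OF assms(2)])
qed

end
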